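(* Let $H$ be a $3$-uniform hypergraph on $7$ vertices not containing a Fano plane. If some vertex $v$ of $H$ satisfies $d(v)\ge 11$ and $e(H\setminus v)\ge 18$, then $H\setminus v$ is isomorphic to $B_6$.
   Context: $d(v)$ is the number of edges of $H$ containing $v$; $H\setminus v$ is the hypergraph obtained by deleting $v$ and all edges containing it; $e(\cdot)$ denotes the number of edges. "Containing" means having a (not necessarily induced) subhypergraph isomorphic to it. The Fano plane is the hypergraph on vertex set $\{1,\dots,7\}$ with edges $123,345,156,147,367,257,246$. $B_6$ is the hypergraph on $6$ vertices with a partition into two disjoint sets $X,Y$ of size $3$ each whose edges are exactly the triples meeting both $X$ and $Y$. *)

theory Defs
  imports Main
begin

definition uniform3 :: "'a set \<Rightarrow> 'a set set \<Rightarrow> bool" where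
  "uniform3 V E \<longleftrightarrow> finite V \<and> (\<forall>e\<in>E. e \<subseteq> V \<and> card e = 3)"

definition contains_hg :: "'a set \<Rightarrow> 'a set set \<Rightarrow> 'b set \<Rightarrow> 'b set set \<Rightarrow> bool" where
  "contains_hg V E W F \<longleftrightarrow> (\<exists>f. inj_on f W \<and> f ` W \<subseteq> V \<and> (\<forall>e\<in>F. f ` e \<in> E))"

definition iso_hg :: "'a set \<Rightarrow> 'a set set \<Rightarrow> 'b set \<Rightarrow> 'b set set \<Rightarrow> bool" where
  "iso_hg V E W F \<longleftrightarrow> (\<exists>f. bij_betw f V W \<and> (\<lambda>e. f ` e) ` E = F)"

definition degree_hg :: "'a set set \<Rightarrow> 'a \<Rightarrow> nat" where
  "degree_hg E v = card {e\<in>E. v \<in> e}"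

definition del_vertex_V :: "'a set \<Rightarrow> 'a \<Rightarrow> 'a set" where
  "del_vertex_V V v = V - {v}"

definition del_vertex_E :: "'a set set \<Rightarrow> 'a \<Rightarrow> 'a set set" where
  "del_vertex_E E v = {e\<in>E. v \<notin> e}"

definition fano_V :: "nat set" where
  "fano_V = {1..7}"

definition fano_E :: "nat set set" where
  "fano_E = {{1,2,3},{3,4,5},{1,5,6},{1,4,7},{3,6,7},{2,5,7},{2,4,6}}"

definition B6_V :: "nat set" where
  "B6_V = {0..5}"

definition B6_E :: "nat set set" where
  "B6_E = {e. e \<subseteq> B6_V \<and> card e = 3 \<and> e \<inter> {0,1,2} \<noteq> {} \<and> e \<inter> {3,4,5} \<noteq> {}}"

end

theory Submission
  imports Defs "HOL-Library.Ramsey"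
begin

text \<open>
  Let \<open>W = V - {v}\<close>. By the degree bound at most four pairs of \<open>W\<close> do not form an
  edge with \<open>v\<close>, and by the edge bound at most two triples of \<open>W\<close> are not edges.
  A perfect matching \<open>{aa', bb', cc'}\<close> of \<open>W\<close> whose pairs all form edges with \<open>v\<close>
  gives three lines of a Fano plane through \<open>v\<close>; the remaining four lines can be either
  parity class of the eight transversals of the matching. Each pair of \<open>W\<close> lies in three
  of the fifteen perfect matchings, so at least three matchings survive, and each of them
  forces a missing triple in both of its classes. Hence exactly two triples \<open>t, t'\<close> are
  missing, in opposite classes of every surviving matching. If \<open>t\<close> and \<open>t'\<close> met, they
  would share two points, and every surviving matching would contain the symmetric
  difference of \<open>t\<close> and \<open>t'\<close> as a pair but not the pair \<open>t \<inter> t'\<close>; only two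
  matchings do. So \<open>t' = W - t\<close>, and the triples of \<open>W\<close> other than \<open>t\<close> and \<open>W - t\<close>
  form \<open>B\<^sub>6\<close>.
\<close>

lemma image_diff_preimage: "g ` (A - {x. g x \<in> S}) = g ` A - S"
  by blast

lemma image_nsets_diff_preimage:
  assumes "bij_betw f A B"
  shows "(`) f ` ([A]\<^bsup>k\<^esup> - {X. f ` X \<in> S}) = [B]\<^bsup>k\<^esup> - S"
  using image_diff_preimage[of "(`) f" "[A]\<^bsup>k\<^esup>" S] bij_betw_nsets[OF assms, of k]
  by (simp add: bij_betw_def)

lemma card_nsets_diff_preimage:
  assumes "bij_betw f A B"
  shows "card ([A]\<^bsup>k\<^esup> - {X. f ` X \<in> S}) = card ([B]\<^bsup>k\<^esup> - S)"
proof -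
  have "inj_on ((`) f) ([A]\<^bsup>k\<^esup> - {X. f ` X \<in> S})"
    using inj_on_nsets[OF bij_betw_imp_inj_on[OF assms]] by (rule inj_on_subset) blast
  then have "card ([A]\<^bsup>k\<^esup> - {X. f ` X \<in> S}) = card ((`) f ` ([A]\<^bsup>k\<^esup> - {X. f ` X \<in> S}))"
    by (rule card_image[symmetric])
  then show ?thesis
    by (simp only: image_nsets_diff_preimage[OF assms])
qed

lemma nsets_disjoint_iff_complement:
  assumes "finite A" and "card A = 2 * k" and "s \<in> [A]\<^bsup>k\<^esup>" and "s' \<in> [A]\<^bsup>k\<^esup>"
  shows "s \<inter> s' = {} \<longleftrightarrow> s' = A - s"
proof
  assume disjoint: "s \<inter> s' = {}"
  then have "s \<union> s' = A"
    using assms by (intro card_seteq) (auto simp: nsets_def card_Un_disjoint)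
  then show "s' = A - s"
    using disjoint by blast
qed blast

lemma degree_hg_eq_card_link:
  assumes "uniform3 V E"
  shows "degree_hg E v = card ([V - {v}]\<^bsup>2\<^esup> \<inter> {p. insert v p \<in> E})"
proof -
  have "bij_betw (\<lambda>e. e - {v}) {e \<in> E. v \<in> e} ([V - {v}]\<^bsup>2\<^esup> \<inter> {p. insert v p \<in> E})"
  proof (rule bij_betw_byWitness[where f' = "insert v"])
    show "\<forall>e \<in> {e \<in> E. v \<in> e}. insert v (e - {v}) = e"
      by blast
    show "\<forall>p \<in> [V - {v}]\<^bsup>2\<^esup> \<inter> {p. insert v p \<in> E}. insert v p - {v} = p"
      by (auto simp: nsets_def)
    show "(\<lambda>e. e - {v}) ` {e \<in> E. v \<in> e} \<subseteq> [V - {v}]\<^bsup>2\<^esup> \<inter> {p. insert v p \<in> E}"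
      using assms by (auto simp: uniform3_def nsets_def insert_absorb intro: card_ge_0_finite)
    show "insert v ` ([V - {v}]\<^bsup>2\<^esup> \<inter> {p. insert v p \<in> E}) \<subseteq> {e \<in> E. v \<in> e}"
      by blast
  qed
  then show ?thesis
    unfolding degree_hg_def by (rule bij_betw_same_card)
qed

lemma del_vertex_E_eq_nsets:
  assumes "uniform3 V E"
  shows "del_vertex_E E v = [V - {v}]\<^bsup>3\<^esup> \<inter> E"
  using assms by (auto simp: uniform3_def del_vertex_E_def nsets_def intro: card_ge_0_finite)

lemma contains_fano_if_lines:
  assumes "distinct [v, a, a', b, b', c, c']" and "{v, a, a', b, b', c, c'} \<subseteq> V"
    and "{{v, a, a'}, {v, b, b'}, {v, c, c'}, {a', b, c}, {a', b', c'}, {a, b, c'}, {a, b', c}} \<subseteq> E"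
  shows "contains_hg V E fano_V fano_E"
proof -
  define h where "h i = [v, a, a', c, b, b', c'] ! (i - 1)" for i :: nat
  have fano_V: "fano_V = {1, 2, 3, 4, 5, 6, 7}"
    by (auto simp: fano_V_def)
  have "inj_on h fano_V"
    using assms(1) by (auto simp: fano_V h_def inj_on_def)
  moreover have "h ` fano_V \<subseteq> V"
    using assms(2) by (simp add: fano_V h_def)
  moreover have "\<forall>e \<in> fano_E. h ` e \<in> E"
    using assms(3) by (simp add: fano_E_def h_def insert_commute)
  ultimately show ?thesis
    unfolding contains_hg_def by blast
qed

lemma B6_V_eq: "B6_V = {0, 1, 2, 3, 4, 5}"
  by (auto simp: B6_V_def)

lemma B6_E_eq: "B6_E = [B6_V]\<^bsup>3\<^esup> - {{0, 1, 2}, {3, 4, 5}}"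
proof -
  have B6_V: "finite B6_V" "card B6_V = 2 * 3"
    and halves: "B6_V - {0, 1, 2} = {3, 4, 5}" "B6_V - {3, 4, 5} = {0, 1, 2}"
    and halves_nsets: "{0, 1, 2} \<in> [B6_V]\<^bsup>3\<^esup>" "{3, 4, 5} \<in> [B6_V]\<^bsup>3\<^esup>"
    by (auto simp: B6_V_eq nsets_def)
  have B6_E_nsets: "B6_E = {e \<in> [B6_V]\<^bsup>3\<^esup>. {0, 1, 2} \<inter> e \<noteq> {} \<and> {3, 4, 5} \<inter> e \<noteq> {}}"
    unfolding B6_E_def nsets_def by (auto simp: B6_V_def intro: finite_subset)
  show ?thesis
  proof (rule set_eqI)
    fix e
    show "e \<in> B6_E \<longleftrightarrow> e \<in> [B6_V]\<^bsup>3\<^esup> - {{0, 1, 2}, {3, 4, 5}}"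
    proof (cases "e \<in> [B6_V]\<^bsup>3\<^esup>")
      case True
      have "{0, 1, 2} \<inter> e = {} \<longleftrightarrow> e = {3, 4, 5}" "{3, 4, 5} \<inter> e = {} \<longleftrightarrow> e = {0, 1, 2}"
        using nsets_disjoint_iff_complement[OF B6_V halves_nsets(1) True]
          nsets_disjoint_iff_complement[OF B6_V halves_nsets(2) True]
        unfolding halves by blast+
      then show ?thesis
        using True unfolding B6_E_nsets
        by (simp only: mem_Collect_eq Diff_iff insert_iff empty_iff de_Morgan_disj simp_thms conj_comms)
    next
      case False
      then show ?thesis
        unfolding B6_E_nsets by simp
    qed
  qed
qed

lemma iso_hg_B6:
  assumes "card W = 6" and X: "X \<in> [W]\<^bsup>3\<^esup>"
  shows "iso_hg W ([W]\<^bsup>3\<^esup> - {X, W - X}) B6_V B6_E"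
proof -
  have "finite W" "X \<subseteq> W" "finite X" "card X = 3"
    using assms by (auto simp: nsets_def intro: card_ge_0_finite)
  then have "card (W - X) = 3"
    using card_Diff_subset[of X W] assms(1) by simp
  obtain g1 :: "'a \<Rightarrow> nat" where g1: "bij_betw g1 X {0, 1, 2}"
    using finite_same_card_bij[OF \<open>finite X\<close>, of "{0, 1, 2::nat}"] \<open>card X = 3\<close> by auto
  obtain g2 :: "'a \<Rightarrow> nat" where g2: "bij_betw g2 (W - X) {3, 4, 5}"
    using finite_same_card_bij[of "W - X" "{3, 4, 5::nat}"] \<open>finite W\<close> \<open>card (W - X) = 3\<close> by auto
  define g where "g x = (if x \<in> X then g1 x else g2 x)" for x
  have g_X: "bij_betw g X {0, 1, 2}"
    using g1 by (rule bij_betw_cong[THEN iffD1, rotated]) (simp add: g_def)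
  moreover have g_WX: "bij_betw g (W - X) {3, 4, 5}"
    using g2 by (rule bij_betw_cong[THEN iffD1, rotated]) (simp add: g_def)
  ultimately have "bij_betw g (X \<union> (W - X)) ({0, 1, 2} \<union> {3, 4, 5})"
    by (rule bij_betw_combine) simp
  moreover have "X \<union> (W - X) = W" "{0, 1, 2} \<union> {3, 4, 5} = B6_V"
    using \<open>X \<subseteq> W\<close> by (auto simp: B6_V_def)
  ultimately have g: "bij_betw g W B6_V"
    by simp
  then have g_halves: "g ` X = {0, 1, 2}" "g ` (W - X) = {3, 4, 5}"
    using g_X g_WX by (simp_all add: bij_betw_def)
  have "(`) g ` ([W]\<^bsup>3\<^esup> - {X, W - X}) = (`) g ` [W]\<^bsup>3\<^esup> - (`) g ` {X, W - X}"
    using X \<open>finite W\<close> \<open>card (W - X) = 3\<close>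
    by (intro inj_on_image_set_diff[OF inj_on_nsets[OF bij_betw_imp_inj_on[OF g]]]) (auto simp: nsets_def)
  also have "\<dots> = B6_E"
    using bij_betw_nsets[OF g, of 3] g_halves by (simp add: bij_betw_def B6_E_eq)
  finally show ?thesis
    unfolding iso_hg_def using g by blast
qed

text \<open>
  A tuple \<open>(a, a', b, b', c, c')\<close> stands for the perfect matching
  \<open>{{a, a'}, {b, b'}, {c, c'}}\<close> of \<open>{0..<6}\<close>, and \<open>matchings6\<close> lists each of the
  fifteen perfect matchings once. The order inside the pairs only decides which of the two
  parity classes of transversals is called odd.
\<close>

type_synonym oriented_matching = "nat \<times> nat \<times> nat \<times> nat \<times> nat \<times> nat"

definition matchings6 :: "oriented_matching set" where
  "matchings6 =
    {(0,1,2,3,4,5), (0,1,2,4,3,5), (0,1,2,5,3,4), (0,2,1,3,4,5), (0,2,1,4,3,5),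
     (0,2,1,5,3,4), (0,3,1,2,4,5), (0,3,1,4,2,5), (0,3,1,5,2,4), (0,4,1,2,3,5),
     (0,4,1,3,2,5), (0,4,1,5,2,3), (0,5,1,2,3,4), (0,5,1,3,2,4), (0,5,1,4,2,3)}"

fun matching_pairs :: "oriented_matching \<Rightarrow> nat set set" where
  "matching_pairs (a, a', b, b', c, c') = {{a, a'}, {b, b'}, {c, c'}}"

text \<open>
  With the lines \<open>{v, a, a'}\<close>, \<open>{v, b, b'}\<close>, \<open>{v, c, c'}\<close>, the odd transversals are the
  remaining lines of a Fano plane (see \<open>contains_fano_if_lines\<close>); the even transversals of
  \<open>(a, a', b, b', c, c')\<close> are the odd ones of \<open>(a', a, b, b', c, c')\<close>.
\<close>

fun odd_transversals :: "oriented_matching \<Rightarrow> nat set set" where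
  "odd_transversals (a, a', b, b', c, c') = {{a', b, c}, {a', b', c'}, {a, b, c'}, {a, b', c}}"

fun even_transversals :: "oriented_matching \<Rightarrow> nat set set" where
  "even_transversals (a, a', b, b', c, c') = {{a, b, c}, {a, b', c'}, {a', b, c'}, {a', b', c}}"

lemma card_matchings6: "card matchings6 = 15"
  by (simp add: matchings6_def)

lemma finite_matchings6: "finite matchings6"
  by (simp add: matchings6_def)

lemma matchings6_distinct:
  assumes "(a, a', b, b', c, c') \<in> matchings6"
  shows "distinct [a, a', b, b', c, c']" and "{a, a', b, b', c, c'} \<subseteq> {0..<6}"
  using assms by (auto simp: matchings6_def)

lemma matching_pairs_transversals_nsets:
  assumes "distinct [a, a', b, b', c, c']" and "{a, a', b, b', c, c'} \<subseteq> A"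
  shows "matching_pairs (a, a', b, b', c, c') \<subseteq> [A]\<^bsup>2\<^esup>"
    and "odd_transversals (a, a', b, b', c, c') \<subseteq> [A]\<^bsup>3\<^esup>"
    and "even_transversals (a, a', b, b', c, c') \<subseteq> [A]\<^bsup>3\<^esup>"
  using assms by (auto simp: nsets_def)

lemma matchings6_nsets:
  assumes "m \<in> matchings6"
  shows "matching_pairs m \<subseteq> [{0..<6}]\<^bsup>2\<^esup>"
    and "odd_transversals m \<subseteq> [{0..<6}]\<^bsup>3\<^esup>"
    and "even_transversals m \<subseteq> [{0..<6}]\<^bsup>3\<^esup>"
  using assms matching_pairs_transversals_nsets[OF matchings6_distinct]
  by (cases m rule: prod_cases6; simp)+

lemma odd_even_transversals_disjoint:
  assumes "distinct [a, a', b, b', c, c']"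
  shows "odd_transversals (a, a', b, b', c, c') \<inter> even_transversals (a, a', b, b', c, c') = {}"
  using assms by (auto simp: insert_eq_iff)

lemma opposite_transversals_meeting:
  assumes "distinct [a, a', b, b', c, c']"
    and "s \<in> odd_transversals (a, a', b, b', c, c')" and "s' \<in> even_transversals (a, a', b, b', c, c')"
    and "s \<inter> s' \<noteq> {}"
  shows "card (s \<inter> s') = 2 \<and> sym_diff s s' \<in> matching_pairs (a, a', b, b', c, c')
    \<and> s \<inter> s' \<notin> matching_pairs (a, a', b, b', c, c')"
  using assms by (simp add: insert_Diff_if doubleton_eq_iff)
    (elim disjE; auto simp: insert_Diff_if doubleton_eq_iff)

lemma card_matchings6_through_pair:
  assumes "p \<in> [{0..<6}]\<^bsup>2\<^esup>"
  shows "card {m \<in> matchings6. p \<in> matching_pairs m} = 3"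
proof -
  have "\<forall>p \<in> (\<Union>x\<in>{0..<6}. \<Union>y\<in>{0..<6} - {x}. {{x, y}}).
      card {m \<in> matchings6. p \<in> matching_pairs m} = 3"
    by code_simp
  then show ?thesis
    using assms unfolding nsets_2_eq by blast
qed

lemma card_matchings6_through_pair_avoiding_pair:
  assumes "p \<in> [{0..<6}]\<^bsup>2\<^esup>" and "q \<in> [{0..<6}]\<^bsup>2\<^esup>" and "p \<inter> q = {}"
  shows "card {m \<in> matchings6. p \<in> matching_pairs m \<and> q \<notin> matching_pairs m} = 2"
proof -
  have "\<forall>p \<in> (\<Union>x\<in>{0..<6}. \<Union>y\<in>{0..<6} - {x}. {{x, y}}). \<forall>q \<in> (\<Union>x\<in>{0..<6}. \<Union>y\<in>{0..<6} - {x}. {{x, y}}).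
      p \<inter> q = {} \<longrightarrow>
      card {m \<in> matchings6. p \<in> matching_pairs m \<and> q \<notin> matching_pairs m} = 2"
    by code_simp
  then show ?thesis
    using assms unfolding nsets_2_eq by blast
qed

lemma card_matchings6_within_ge_3:
  assumes "card ([{0..<6}]\<^bsup>2\<^esup> - G) \<le> 4"
  shows "3 \<le> card {m \<in> matchings6. matching_pairs m \<subseteq> G}"
proof -
  let ?good = "{m \<in> matchings6. matching_pairs m \<subseteq> G}"
  let ?bad = "matchings6 - ?good"
  have "?bad \<subseteq> (\<Union>p \<in> [{0..<6}]\<^bsup>2\<^esup> - G. {m \<in> matchings6. p \<in> matching_pairs m})"
    using matchings6_nsets(1) by blast
  then have "card ?bad \<le> card (\<Union>p \<in> [{0..<6}]\<^bsup>2\<^esup> - G. {m \<in> matchings6. p \<in> matching_pairs m})"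
    by (rule card_mono[rotated]) (simp add: finite_imp_finite_nsets finite_matchings6)
  also have "\<dots> \<le> (\<Sum>p \<in> [{0..<6}]\<^bsup>2\<^esup> - G. card {m \<in> matchings6. p \<in> matching_pairs m})"
    by (rule card_UN_le) (simp add: finite_imp_finite_nsets)
  also have "\<dots> = 3 * card ([{0..<6}]\<^bsup>2\<^esup> - G)"
    by (simp add: card_matchings6_through_pair)
  finally have "card ?bad \<le> 12"
    using assms by linarith
  moreover have "card ?bad = card matchings6 - card ?good"
    by (rule card_Diff_subset) (auto intro: finite_subset[OF _ finite_matchings6])
  ultimately show ?thesis
    using card_matchings6 by linarith
qed

lemma missing_triples_one_per_class:
  assumes "card ([{0..<6}]\<^bsup>3\<^esup> - T) \<le> 2" and m: "m \<in> matchings6"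
    and "\<not> odd_transversals m \<subseteq> T" and "\<not> even_transversals m \<subseteq> T"
  shows "\<exists>s \<in> odd_transversals m. \<exists>s' \<in> even_transversals m. [{0..<6}]\<^bsup>3\<^esup> - T = {s, s'}"
proof -
  obtain s s' where s: "s \<in> odd_transversals m" "s \<notin> T"
    and s': "s' \<in> even_transversals m" "s' \<notin> T"
    using assms(3,4) by blast
  have "s \<noteq> s'"
    using s s' m odd_even_transversals_disjoint[OF matchings6_distinct(1)]
    by (cases m rule: prod_cases6) blast
  moreover have "{s, s'} \<subseteq> [{0..<6}]\<^bsup>3\<^esup> - T"
    using s s' matchings6_nsets[OF m] by blast
  ultimately have "{s, s'} = [{0..<6}]\<^bsup>3\<^esup> - T"
    using assms(1) by (intro card_seteq) (auto simp: finite_imp_finite_nsets)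
  then show ?thesis
    using s s' by blast
qed

lemma card_matchings6_separating_le_2:
  assumes "t \<inter> t' \<noteq> {}"
  shows "card {m \<in> matchings6. t \<in> odd_transversals m \<and> t' \<in> even_transversals m
      \<or> t' \<in> odd_transversals m \<and> t \<in> even_transversals m} \<le> 2"
    (is "card ?S \<le> 2")
proof (cases "?S = {}")
  case False
  have opposite: "sym_diff t t' \<in> matching_pairs m \<and> t \<inter> t' \<notin> matching_pairs m \<and> card (t \<inter> t') = 2"
    if "m \<in> ?S" for m
  proof (cases m rule: prod_cases6)
    case (fields a a' b b' c c')
    have "m \<in> matchings6"
      using that by simp
    then have distinct: "distinct [a, a', b, b', c, c']"
      unfolding fields by (rule matchings6_distinct(1))
    from that consider "t \<in> odd_transversals m" "t' \<in> even_transversals m"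
      | "t' \<in> odd_transversals m" "t \<in> even_transversals m"
      by auto
    then show ?thesis
    proof cases
      case 1
      then show ?thesis
        using opposite_transversals_meeting[OF distinct, of t t'] assms unfolding fields by simp
    next
      case 2
      then show ?thesis
        using opposite_transversals_meeting[OF distinct, of t' t] assms unfolding fields
        by (simp add: Int_commute Un_commute)
    qed
  qed
  from False obtain m0 where m0: "m0 \<in> ?S"
    unfolding ex_in_conv[symmetric] ..
  have "?S \<subseteq> {m \<in> matchings6. sym_diff t t' \<in> matching_pairs m \<and> t \<inter> t' \<notin> matching_pairs m}"
    using opposite by blast
  then have "card ?S \<le> card {m \<in> matchings6. sym_diff t t' \<in> matching_pairs m \<and> t \<inter> t' \<notin> matching_pairs m}"
    by (rule card_mono[rotated]) (simp add: finite_matchings6)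
  also have "\<dots> = 2"
  proof (rule card_matchings6_through_pair_avoiding_pair)
    have "m0 \<in> matchings6" "t \<in> odd_transversals m0 \<union> even_transversals m0"
      using m0 by auto
    then have "t \<in> [{0..<6}]\<^bsup>3\<^esup>"
      using matchings6_nsets(2,3) by blast
    then show "t \<inter> t' \<in> [{0..<6}]\<^bsup>2\<^esup>"
      using opposite[OF m0] by (auto simp: nsets_def)
    show "sym_diff t t' \<in> [{0..<6}]\<^bsup>2\<^esup>"
      using opposite[OF m0] matchings6_nsets(1) \<open>m0 \<in> matchings6\<close> by blast
  qed blast
  finally show ?thesis .
next
  case True
  then show ?thesis
    unfolding True by simp
qed

lemma missing_triples_complementary6:
  assumes pairs: "card ([{0..<6}]\<^bsup>2\<^esup> - G) \<le> 4" and triples: "card ([{0..<6}]\<^bsup>3\<^esup> - T) \<le> 2"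
    and fano_free: "\<And>m. m \<in> matchings6 \<Longrightarrow> matching_pairs m \<subseteq> G
      \<Longrightarrow> \<not> odd_transversals m \<subseteq> T \<and> \<not> even_transversals m \<subseteq> T"
  shows "\<exists>X \<in> [{0..<6}]\<^bsup>3\<^esup>. [{0..<6}]\<^bsup>3\<^esup> - T = {X, {0..<6} - X}"
proof -
  define good where "good = {m \<in> matchings6. matching_pairs m \<subseteq> G}"
  have card_good: "3 \<le> card good"
    unfolding good_def using pairs by (rule card_matchings6_within_ge_3)
  have missing: "\<exists>s \<in> odd_transversals m. \<exists>s' \<in> even_transversals m. [{0..<6}]\<^bsup>3\<^esup> - T = {s, s'}"
    if "m \<in> good" for m
  proof -
    have "m \<in> matchings6" "matching_pairs m \<subseteq> G"
      using that unfolding good_def by auto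
    then show ?thesis
      using fano_free[of m] missing_triples_one_per_class[OF triples, of m] by blast
  qed
  have "good \<noteq> {}"
    using card_good by (metis card.empty not_numeral_le_zero)
  then obtain m0 where "m0 \<in> good"
    by blast
  then obtain t t' where missing_tt': "[{0..<6}]\<^bsup>3\<^esup> - T = {t, t'}"
    using missing[OF \<open>m0 \<in> good\<close>] by blast
  then have t_nsets: "t \<in> [{0..<6}]\<^bsup>3\<^esup>" "t' \<in> [{0..<6}]\<^bsup>3\<^esup>"
    by (metis Diff_iff insertI1 insert_commute)+
  have "t \<inter> t' = {}"
  proof (rule ccontr)
    assume "t \<inter> t' \<noteq> {}"
    have "good \<subseteq> {m \<in> matchings6. t \<in> odd_transversals m \<and> t' \<in> even_transversals m
        \<or> t' \<in> odd_transversals m \<and> t \<in> even_transversals m}"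
    proof
      fix m
      assume m: "m \<in> good"
      then obtain s s' where s: "s \<in> odd_transversals m" "s' \<in> even_transversals m"
        and "[{0..<6}]\<^bsup>3\<^esup> - T = {s, s'}"
        using missing[OF m] by blast
      then have "{s, s'} = {t, t'}"
        using missing_tt' by simp
      then consider "s = t" "s' = t'" | "s = t'" "s' = t"
        by (auto simp: doubleton_eq_iff)
      then show "m \<in> {m \<in> matchings6. t \<in> odd_transversals m \<and> t' \<in> even_transversals m
          \<or> t' \<in> odd_transversals m \<and> t \<in> even_transversals m}"
        using s m unfolding good_def by cases simp_all
    qed
    then have "card good \<le> card {m \<in> matchings6. t \<in> odd_transversals m \<and> t' \<in> even_transversals m
        \<or> t' \<in> odd_transversals m \<and> t \<in> even_transversals m}"
      by (rule card_mono[rotated]) (simp add: finite_matchings6)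
    also have "\<dots> \<le> 2"
      using \<open>t \<inter> t' \<noteq> {}\<close> by (rule card_matchings6_separating_le_2)
    finally have "card good \<le> 2" .
    with card_good show False
      by linarith
  qed
  then have "t' = {0..<6} - t"
    using nsets_disjoint_iff_complement[of "{0..<6}" 3 t t'] t_nsets by simp
  then show ?thesis
    using t_nsets(1) missing_tt' by blast
qed

lemma missing_triples_complementary:
  fixes W :: "'a set"
  assumes W: "card W = 6"
    and pairs: "card ([W]\<^bsup>2\<^esup> - G) \<le> 4" and triples: "card ([W]\<^bsup>3\<^esup> - T) \<le> 2"
    and fano_free: "\<And>a a' b b' c c'. distinct [a, a', b, b', c, c'] \<Longrightarrow> {a, a', b, b', c, c'} \<subseteq> W
      \<Longrightarrow> {{a, a'}, {b, b'}, {c, c'}} \<subseteq> G \<Longrightarrow> \<not> {{a', b, c}, {a', b', c'}, {a, b, c'}, {a, b', c}} \<subseteq> T"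
  shows "\<exists>X \<in> [W]\<^bsup>3\<^esup>. [W]\<^bsup>3\<^esup> - T = {X, W - X}"
proof -
  obtain f :: "nat \<Rightarrow> 'a" where f: "bij_betw f {0..<6} W"
    using ex_bij_betw_nat_finite[of W] W by (metis card.infinite zero_neq_numeral)
  have inj: "inj_on f {0..<6}"
    using f by (rule bij_betw_imp_inj_on)
  define G' where "G' = {p. f ` p \<in> G}"
  define T' where "T' = {t. f ` t \<in> T}"
  have "card ([{0..<6}]\<^bsup>2\<^esup> - G') \<le> 4" "card ([{0..<6}]\<^bsup>3\<^esup> - T') \<le> 2"
    using pairs triples card_nsets_diff_preimage[OF f] unfolding G'_def T'_def by simp_all
  moreover have "\<not> odd_transversals m \<subseteq> T' \<and> \<not> even_transversals m \<subseteq> T'"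
    if "m \<in> matchings6" and "matching_pairs m \<subseteq> G'" for m
  proof (cases m rule: prod_cases6)
    case (fields a a' b b' c c')
    have "distinct [a, a', b, b', c, c']" and range: "{a, a', b, b', c, c'} \<subseteq> {0..<6}"
      using that(1) matchings6_distinct unfolding fields by blast+
    then have distinct: "distinct [f a, f a', f b, f b', f c, f c']"
      using inj_on_subset[OF inj range] by (simp add: inj_on_eq_iff)
    have in_W: "{f a, f a', f b, f b', f c, f c'} \<subseteq> W"
      using range bij_betw_imp_surj_on[OF f] by blast
    have in_G: "{{f a, f a'}, {f b, f b'}, {f c, f c'}} \<subseteq> G"
      using that(2) unfolding fields G'_def by simp
    have "\<not> {{f a', f b, f c}, {f a', f b', f c'}, {f a, f b, f c'}, {f a, f b', f c}} \<subseteq> T"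
      using distinct in_W in_G by (rule fano_free)
    moreover have "\<not> {{f a, f b, f c}, {f a, f b', f c'}, {f a', f b, f c'}, {f a', f b', f c}} \<subseteq> T"
      using distinct in_W in_G by (intro fano_free) (auto simp: insert_commute)
    ultimately show ?thesis
      unfolding fields T'_def by simp
  qed
  ultimately have "\<exists>X' \<in> [{0..<6}]\<^bsup>3\<^esup>. [{0..<6}]\<^bsup>3\<^esup> - T' = {X', {0..<6} - X'}"
    by (rule missing_triples_complementary6)
  then obtain X' where X': "X' \<in> [{0..<6}]\<^bsup>3\<^esup>" "[{0..<6}]\<^bsup>3\<^esup> - T' = {X', {0..<6} - X'}"
    by blast
  have "[W]\<^bsup>3\<^esup> - T = {f ` X', f ` ({0..<6} - X')}"
    using image_nsets_diff_preimage[OF f, of 3 T] X'(2) unfolding T'_def by simp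
  also have "f ` ({0..<6} - X') = W - f ` X'"
    using X'(1) inj bij_betw_imp_surj_on[OF f] by (simp add: inj_on_image_set_diff nsets_def)
  finally show ?thesis
    using X'(1) bij_betw_nsets[OF f, of 3] by (auto simp: bij_betw_def)
qed

theorem lemma2p3:
  fixes V :: "'a set" and E :: "'a set set" and v :: 'a
  assumes "uniform3 V E"
    and "card V = 7"
    and "\<not> contains_hg V E fano_V fano_E"
    and "v \<in> V"
    and "degree_hg E v \<ge> 11"
    and "card (del_vertex_E E v) \<ge> 18"
  shows "iso_hg (del_vertex_V V v) (del_vertex_E E v) B6_V B6_E"
proof -
  let ?W = "V - {v}"
  have "finite V"
    using assms(1) by (simp add: uniform3_def)
  then have W: "finite ?W" "card ?W = 6"
    using assms(2,4) by simp_all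
  have pairs: "card ([?W]\<^bsup>2\<^esup> - {p. insert v p \<in> E}) \<le> 4"
    using W degree_hg_eq_card_link[OF assms(1), of v] assms(5)
    by (simp add: card_Diff_subset_Int finite_imp_finite_nsets numeral_eq_Suc)
  have triples: "card ([?W]\<^bsup>3\<^esup> - E) \<le> 2"
    using W del_vertex_E_eq_nsets[OF assms(1), of v] assms(6)
    by (simp add: card_Diff_subset_Int finite_imp_finite_nsets numeral_eq_Suc)
  have fano_free: "\<not> {{a', b, c}, {a', b', c'}, {a, b, c'}, {a, b', c}} \<subseteq> E"
    if "distinct [a, a', b, b', c, c']" "{a, a', b, b', c, c'} \<subseteq> ?W"
      "{{a, a'}, {b, b'}, {c, c'}} \<subseteq> {p. insert v p \<in> E}" for a a' b b' c c'
    using contains_fano_if_lines[of v a a' b b' c c' V E] assms(3,4) that by auto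
  obtain X where X: "X \<in> [?W]\<^bsup>3\<^esup>" "[?W]\<^bsup>3\<^esup> - E = {X, ?W - X}"
    using missing_triples_complementary[OF W(2) pairs triples fano_free] by blast
  have "del_vertex_E E v = [?W]\<^bsup>3\<^esup> - {X, ?W - X}"
    using del_vertex_E_eq_nsets[OF assms(1), of v] X(2) by blast
  then show ?thesis
    using iso_hg_B6[OF W(2) X(1)] by (simp add: del_vertex_V_def)
qed

end
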